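(* Let $\Lambda\Subset\mathbb X$, let $Y\Subset\mathbb X$, let $\preceq$ be an arbitrary total order on $Y$ (strict part $\prec$), and suppose that $Z(\Lambda\mid\{y'\in Y\mid y'\prec y\})\neq0$ for all $y\in Y$. Then \[ R(Y,\Lambda)=\prod_{y\in Y}R\big(y,\Lambda\ \big|\ \{y'\in Y\mid y'\prec y\}\big). \]
   Context: $\mathbb X$ is a finite or countably infinite set, $X\Subset\mathbb X$ means finite subset, $\mathbf F$ is the set of finite subsets of $\mathbb X$. Fix $z:\mathbb X\to\mathbb C$, $W:\mathbf F\to\mathbb C$; $z^X=\prod_{y\in X}z(y)$; singletons $\{y\}$ are written $y$ inside arguments. Conditional interaction: $W(X\mid B)=\prod_{C\subset B}W(X\cup C)$ if $X\cap B=\varnothing$, $W(X\mid B)=0$ if $X=\{y\}$ with $y\in B$, and $W(X\mid B)=1$ otherwise. Boltzmann factor $\kappa(X\mid B)=\prod_{\varnothing\neq S\subset X}W(S\mid B)$. Partition functions $Z(X,\Lambda\mid B)=\sum_{Y'\subset\Lambda\setminus X}z^{X\cup Y'}\kappa(X\cup Y'\mid B)$, $Z(\Lambda\mid B)=Z(\varnothing,\Lambda\mid B)$, with $B$ omitted when $B=\varnothing$. Correlations $R(X,\Lambda\mid B)=Z(X,\Lambda\mid B)/Z(\Lambda\mid B)$ when $Z(\Lambda\mid B)\neq0$ (note $X$ need not be a subset of $\Lambda$). *)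

theory Defs
  imports Complex_Main "HOL-Library.Countable"
begin

text \<open>The ground set is a countable type 'a; z is the activity, W the interaction.
  Singletons y are written {y}.\<close>

definition zpow :: "('a \<Rightarrow> complex) \<Rightarrow> 'a set \<Rightarrow> complex" where
  "zpow z X = (\<Prod>y\<in>X. z y)"

definition condW :: "('a set \<Rightarrow> complex) \<Rightarrow> 'a set \<Rightarrow> 'a set \<Rightarrow> complex" where
  "condW W X B =
     (if X \<inter> B = {} then (\<Prod>C\<in>Pow B. W (X \<union> C))
      else if (\<exists>y. X = {y} \<and> y \<in> B) then 0 else 1)"

definition kappa :: "('a set \<Rightarrow> complex) \<Rightarrow> 'a set \<Rightarrow> 'a set \<Rightarrow> complex" where
  "kappa W X B = (\<Prod>S\<in>Pow X - {{}}. condW W S B)"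

definition Zpart :: "('a \<Rightarrow> complex) \<Rightarrow> ('a set \<Rightarrow> complex) \<Rightarrow> 'a set \<Rightarrow> 'a set \<Rightarrow> 'a set \<Rightarrow> complex" where
  "Zpart z W X \<Lambda> B = (\<Sum>Y'\<in>Pow (\<Lambda> - X). zpow z (X \<union> Y') * kappa W (X \<union> Y') B)"

text \<open>Correlation R(X, Lambda | B) = Z(X,Lambda|B)/Z(Lambda|B) (meaningful when the denominator is nonzero).\<close>
definition Rcorr :: "('a \<Rightarrow> complex) \<Rightarrow> ('a set \<Rightarrow> complex) \<Rightarrow> 'a set \<Rightarrow> 'a set \<Rightarrow> 'a set \<Rightarrow> complex" where
  "Rcorr z W X \<Lambda> B = Zpart z W X \<Lambda> B / Zpart z W {} \<Lambda> B"

end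

theory Submission
  imports Defs
begin

text \<open>Since \<open>\<kappa>(Y | B) = 0\<close> as soon as \<open>Y\<close> meets \<open>B\<close>, and the Boltzmann factor splits as
  \<open>\<kappa>(X \<union> Y | B) = \<kappa>(X | B) \<kappa>(Y | X \<union> B)\<close>, factoring out \<open>X\<close> gives
  \<open>Z(X, \<Lambda> | B) = z\<^sup>X \<kappa>(X | B) Z(\<Lambda> | X \<union> B)\<close>. Consequently adjoining a point \<open>m\<close> to \<open>X\<close>
  multiplies the correlation by a conditional one-point correlation,
  \<open>R(X \<union> {m}, \<Lambda> | B) = R(X, \<Lambda> | B) R(m, \<Lambda> | X \<union> B)\<close>, and removing the largest point of \<open>Y\<close>
  one at a time yields the product formula.\<close>

lemma kappa_eq_prod_W:
  assumes "finite X" "finite B" "X \<inter> B = {}"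
  shows "kappa W X B = (\<Prod>U\<in>{U\<in>Pow (X \<union> B). U \<inter> X \<noteq> {}}. W U)"
proof -
  have "kappa W X B = (\<Prod>S\<in>Pow X - {{}}. \<Prod>C\<in>Pow B. W (S \<union> C))"
    unfolding kappa_def
    by (rule prod.cong) (use assms in \<open>auto simp: condW_def\<close>)
  also have "\<dots> = (\<Prod>(S, C)\<in>(Pow X - {{}}) \<times> Pow B. W (S \<union> C))"
    by (rule prod.cartesian_product)
  also have "\<dots> = (\<Prod>U\<in>{U\<in>Pow (X \<union> B). U \<inter> X \<noteq> {}}. W U)"
    by (rule prod.reindex_bij_witness[where i = "\<lambda>U. (U \<inter> X, U \<inter> B)" and j = "\<lambda>(S, C). S \<union> C"])
      (use assms in auto)
  finally show ?thesis .
qed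

lemma kappa_union:
  assumes "finite X" "finite Y" "finite B" "X \<inter> B = {}" "Y \<inter> B = {}" "X \<inter> Y = {}"
  shows "kappa W (X \<union> Y) B = kappa W X B * kappa W Y (X \<union> B)"
proof -
  have disjoint: "(X \<union> Y) \<inter> B = {}" "Y \<inter> (X \<union> B) = {}"
    using assms by auto
  have split: "{U\<in>Pow (X \<union> Y \<union> B). U \<inter> (X \<union> Y) \<noteq> {}}
      = {U\<in>Pow (X \<union> B). U \<inter> X \<noteq> {}} \<union> {U\<in>Pow (Y \<union> (X \<union> B)). U \<inter> Y \<noteq> {}}"
    by auto
  have "kappa W (X \<union> Y) B = (\<Prod>U\<in>{U\<in>Pow (X \<union> Y \<union> B). U \<inter> (X \<union> Y) \<noteq> {}}. W U)"
    using kappa_eq_prod_W[of "X \<union> Y" B W] disjoint assms by simp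
  also have "\<dots> = (\<Prod>U\<in>{U\<in>Pow (X \<union> B). U \<inter> X \<noteq> {}}. W U)
      * (\<Prod>U\<in>{U\<in>Pow (Y \<union> (X \<union> B)). U \<inter> Y \<noteq> {}}. W U)"
    unfolding split by (rule prod.union_disjoint) (use assms in auto)
  also have "\<dots> = kappa W X B * kappa W Y (X \<union> B)"
    using kappa_eq_prod_W[of X B W] kappa_eq_prod_W[of Y "X \<union> B" W] disjoint assms by simp
  finally show ?thesis .
qed

lemma kappa_eq_0:
  assumes "finite X" "y \<in> X" "y \<in> B"
  shows "kappa W X B = 0"
  unfolding kappa_def
  by (rule prod_zero) (use assms in \<open>auto intro!: bexI[where x = "{y}"] simp: condW_def\<close>)

lemma Zpart_eq_sum_disjoint:
  assumes "finite \<Lambda>" "finite X"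
  shows "Zpart z W X \<Lambda> B = (\<Sum>Y'\<in>Pow (\<Lambda> - X - B). zpow z (X \<union> Y') * kappa W (X \<union> Y') B)"
  unfolding Zpart_def
proof (rule sum.mono_neutral_right)
  show "\<forall>Y'\<in>Pow (\<Lambda> - X) - Pow (\<Lambda> - X - B). zpow z (X \<union> Y') * kappa W (X \<union> Y') B = 0"
  proof
    fix Y' assume "Y' \<in> Pow (\<Lambda> - X) - Pow (\<Lambda> - X - B)"
    then obtain y where "y \<in> Y'" "y \<in> B" "finite Y'"
      using assms by (auto dest: finite_subset)
    then show "zpow z (X \<union> Y') * kappa W (X \<union> Y') B = 0"
      using assms(2) kappa_eq_0[of "X \<union> Y'" y B W] by simp
  qed
qed (use assms in auto)

lemma Zpart_factor:
  assumes "finite \<Lambda>" "finite X" "finite B" "X \<inter> B = {}"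
  shows "Zpart z W X \<Lambda> B = zpow z X * kappa W X B * Zpart z W {} \<Lambda> (X \<union> B)"
proof -
  have "Zpart z W X \<Lambda> B = (\<Sum>Y'\<in>Pow (\<Lambda> - X - B). zpow z (X \<union> Y') * kappa W (X \<union> Y') B)"
    using assms(1,2) by (rule Zpart_eq_sum_disjoint)
  also have "\<dots> = (\<Sum>Y'\<in>Pow (\<Lambda> - X - B). zpow z X * kappa W X B * (zpow z Y' * kappa W Y' (X \<union> B)))"
  proof (rule sum.cong)
    fix Y' assume "Y' \<in> Pow (\<Lambda> - X - B)"
    then have "finite Y'" "Y' \<inter> X = {}" "Y' \<inter> B = {}"
      using assms by (auto dest: finite_subset)
    then show "zpow z (X \<union> Y') * kappa W (X \<union> Y') B
        = zpow z X * kappa W X B * (zpow z Y' * kappa W Y' (X \<union> B))"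
      using assms by (simp add: zpow_def prod.union_disjoint kappa_union Int_commute)
  qed simp
  also have "\<dots> = zpow z X * kappa W X B * Zpart z W {} \<Lambda> (X \<union> B)"
    using assms by (simp add: Zpart_eq_sum_disjoint sum_distrib_left Diff_eq Int_ac)
  finally show ?thesis .
qed

lemma Rcorr_eq:
  assumes "finite \<Lambda>" "finite X" "finite B" "X \<inter> B = {}"
  shows "Rcorr z W X \<Lambda> B = zpow z X * kappa W X B * Zpart z W {} \<Lambda> (X \<union> B) / Zpart z W {} \<Lambda> B"
  unfolding Rcorr_def Zpart_factor[OF assms] ..

lemma Rcorr_insert:
  assumes "finite \<Lambda>" "finite X" "finite B" "X \<inter> B = {}" "m \<notin> X \<union> B"
    and "Zpart z W {} \<Lambda> (X \<union> B) \<noteq> 0"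
  shows "Rcorr z W (insert m X) \<Lambda> B = Rcorr z W X \<Lambda> B * Rcorr z W {m} \<Lambda> (X \<union> B)"
proof -
  have "zpow z (insert m X) = zpow z X * zpow z {m}"
    using assms by (simp add: zpow_def)
  moreover have "kappa W (insert m X) B = kappa W X B * kappa W {m} (X \<union> B)"
    using assms kappa_union[of X "{m}" B W] by simp
  moreover have "insert m X \<union> B = {m} \<union> (X \<union> B)"
    by simp
  ultimately have "Rcorr z W (insert m X) \<Lambda> B = zpow z X * kappa W X B
      * (zpow z {m} * kappa W {m} (X \<union> B) * Zpart z W {} \<Lambda> ({m} \<union> (X \<union> B))) / Zpart z W {} \<Lambda> B"
    using assms by (simp add: Rcorr_eq mult_ac)
  also have "\<dots> = Rcorr z W X \<Lambda> B * Rcorr z W {m} \<Lambda> (X \<union> B)"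
    using assms by (simp add: Rcorr_eq)
  finally show ?thesis .
qed

lemma Rcorr_eq_prod_Rcorr_singleton:
  assumes "finite \<Lambda>" "finite Y" "finite B" "Y \<inter> B = {}"
    and "trans_on Y r" "antisym_on Y r" "total_on Y r"
    and "Zpart z W {} \<Lambda> B \<noteq> 0"
    and "\<And>y. y \<in> Y \<Longrightarrow> Zpart z W {} \<Lambda> (Y \<inter> underS r y \<union> B) \<noteq> 0"
  shows "Rcorr z W Y \<Lambda> B = (\<Prod>y\<in>Y. Rcorr z W {y} \<Lambda> (Y \<inter> underS r y \<union> B))"
  using assms(2,4-)
proof (induction Y rule: finite_psubset_induct)
  case (psubset Y)
  show ?case
  proof (cases "Y = {}")
    case True
    with psubset.prems show ?thesis by (simp add: Rcorr_def)
  next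
    case False
    then obtain m where "m \<in> Y" and m_greatest: "\<And>y. y \<in> Y \<Longrightarrow> y \<noteq> m \<Longrightarrow> (y, m) \<in> r"
      using Finite_Set.bex_greatest_element[to_set] psubset by metis
    define X where "X = Y - {m}"
    have "X \<subset> Y" and Y_eq: "Y = insert m X"
      using \<open>m \<in> Y\<close> unfolding X_def by auto
    have below_m: "Y \<inter> underS r m = X"
      using m_greatest unfolding X_def underS_def by auto
    have below_y: "X \<inter> underS r y = Y \<inter> underS r y" if "y \<in> X" for y
      using that \<open>m \<in> Y\<close> m_greatest psubset.prems(3)
      unfolding X_def underS_def antisym_on_def by auto
    have "Zpart z W {} \<Lambda> (X \<union> B) \<noteq> 0"
      using psubset.prems(6)[OF \<open>m \<in> Y\<close>] by (simp add: below_m)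
    then have "Rcorr z W Y \<Lambda> B = Rcorr z W X \<Lambda> B * Rcorr z W {m} \<Lambda> (X \<union> B)"
      unfolding Y_eq
      by (intro Rcorr_insert) (use assms(1,3) psubset.hyps psubset.prems(1) \<open>m \<in> Y\<close> in \<open>auto simp: X_def\<close>)
    also have "Rcorr z W X \<Lambda> B = (\<Prod>y\<in>X. Rcorr z W {y} \<Lambda> (X \<inter> underS r y \<union> B))"
      using \<open>X \<subset> Y\<close> psubset.prems
      by (intro psubset.IH) (auto intro: trans_on_subset antisym_on_subset total_on_subset simp: below_y)
    also have "\<dots> = (\<Prod>y\<in>X. Rcorr z W {y} \<Lambda> (Y \<inter> underS r y \<union> B))"
      by (simp add: below_y)
    finally show ?thesis
      using psubset.hyps \<open>m \<in> Y\<close> below_m by (simp add: prod.remove X_def mult.commute)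
  qed
qed

theorem lemma4p4:
  fixes z :: "'a::countable \<Rightarrow> complex" and W :: "'a set \<Rightarrow> complex"
    and \<Lambda> Y :: "'a set" and r :: "('a \<times> 'a) set"
  assumes "finite \<Lambda>" and "finite Y"
    and "linear_order_on Y r"
    and "\<And>y. y \<in> Y \<Longrightarrow> Zpart z W {} \<Lambda> {y'\<in>Y. (y', y) \<in> r \<and> y' \<noteq> y} \<noteq> 0"
    and "Zpart z W {} \<Lambda> {} \<noteq> 0"
  shows "Rcorr z W Y \<Lambda> {} = (\<Prod>y\<in>Y. Rcorr z W {y} \<Lambda> {y'\<in>Y. (y', y) \<in> r \<and> y' \<noteq> y})"
proof -
  have below: "{y'\<in>Y. (y', y) \<in> r \<and> y' \<noteq> y} = Y \<inter> underS r y \<union> {}" for y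
    by (auto simp: underS_def)
  have "trans_on Y r" "antisym_on Y r" "total_on Y r"
    using assms(3) unfolding linear_order_on_def partial_order_on_def preorder_on_def
    by (auto intro: trans_on_subset antisym_on_subset)
  then show ?thesis
    unfolding below using assms(4) [unfolded below]
    by (intro Rcorr_eq_prod_Rcorr_singleton) (simp_all add: assms(1,2,5))
qed

end
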